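(* Let $m\geq 2$ be an integer and let $\delta$ be a real number with $0\leq\delta<\frac{1}{2m}\left(\frac12-\frac{1}{2^m-1}\right)$. Then there exists a sequence of binary $[[N_i,k_i,d_i]]$ stabilizer codes with $N_i\to\infty$, $$\liminf_{i\to\infty}\frac{k_i}{N_i}\geq R_m^{(\mathrm{ALT})}(\delta):=1-\frac{10}{3}m\delta-\frac{2}{2^m-1},\qquad \liminf_{i\to\infty}\frac{d_i}{N_i}\geq\delta.$$
   Context: A binary $[[n,k,d]]$ stabilizer code is given by an $(n+k)$-dimensional subspace $C\subseteq\mathbf{F}_2^{2n}$ with $C^{\perp\mathrm s}\subseteq C$, where $\langle\vec x,\vec y\rangle_{\mathrm s}=\sum_{i=1}^n x_iy_{n+i}-\sum_{i=1}^n x_{n+i}y_i$ and $C^{\perp\mathrm s}$ is the orthogonal complement of $C$ with respect to this form; its minimum distance $d$ is $\min\{w(\vec x)\mid \vec x\in C\setminus C^{\perp\mathrm s}\}$ with $w(\vec x)=\#\{1\le i\le n\mid (x_i,x_{n+i})\neq(0,0)\}$. *)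

theory Defs
  imports Complex_Main "HOL-Library.Liminf_Limsup" "HOL-Library.Extended_Real"
begin

text \<open>Vectors of F_2^{2n} are modelled as functions nat => bool (True = 1)
  vanishing outside {0..<2n}; coordinates 0..n-1 are x_1..x_n and
  n..2n-1 are x_{n+1}..x_{2n}.\<close>

definition vecs :: "nat \<Rightarrow> (nat \<Rightarrow> bool) set" where
  "vecs n = {x. \<forall>i. 2 * n \<le> i \<longrightarrow> \<not> x i}"

definition vzero :: "nat \<Rightarrow> bool" where
  "vzero = (\<lambda>_. False)"

definition vadd :: "(nat \<Rightarrow> bool) \<Rightarrow> (nat \<Rightarrow> bool) \<Rightarrow> nat \<Rightarrow> bool" where
  "vadd x y = (\<lambda>i. x i \<noteq> y i)"

definition vsum :: "(nat \<Rightarrow> bool) set \<Rightarrow> nat \<Rightarrow> bool" where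
  "vsum S = (\<lambda>i. odd (card {x \<in> S. x i}))"

definition is_subspace :: "nat \<Rightarrow> (nat \<Rightarrow> bool) set \<Rightarrow> bool" where
  "is_subspace n C \<longleftrightarrow> C \<subseteq> vecs n \<and> vzero \<in> C \<and> (\<forall>x\<in>C. \<forall>y\<in>C. vadd x y \<in> C)"

definition has_dim :: "(nat \<Rightarrow> bool) set \<Rightarrow> nat \<Rightarrow> bool" where
  "has_dim C d \<longleftrightarrow> (\<exists>B. finite B \<and> B \<subseteq> C \<and> card B = d
      \<and> (\<forall>S\<subseteq>B. S \<noteq> {} \<longrightarrow> vsum S \<noteq> vzero)
      \<and> (\<forall>x\<in>C. \<exists>S\<subseteq>B. x = vsum S))"

text \<open>Symplectic form over F_2 (the minus sign is irrelevant in characteristic 2):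
  it is 0 iff the number of i<n with x_i y_{n+i} = 1, plus the number with
  x_{n+i} y_i = 1, is even.\<close>
definition symp_orth :: "nat \<Rightarrow> (nat \<Rightarrow> bool) \<Rightarrow> (nat \<Rightarrow> bool) \<Rightarrow> bool" where
  "symp_orth n x y \<longleftrightarrow>
     even (card {i. i < n \<and> x i \<and> y (n + i)} + card {i. i < n \<and> x (n + i) \<and> y i})"

definition symp_perp :: "nat \<Rightarrow> (nat \<Rightarrow> bool) set \<Rightarrow> (nat \<Rightarrow> bool) set" where
  "symp_perp n C = {y \<in> vecs n. \<forall>x\<in>C. symp_orth n x y}"

definition stabilizer_code :: "nat \<Rightarrow> nat \<Rightarrow> (nat \<Rightarrow> bool) set \<Rightarrow> bool" where
  "stabilizer_code n k C \<longleftrightarrow> is_subspace n C \<and> has_dim C (n + k) \<and> symp_perp n C \<subseteq> C"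

definition sweight :: "nat \<Rightarrow> (nat \<Rightarrow> bool) \<Rightarrow> nat" where
  "sweight n x = card {i. i < n \<and> (x i \<or> x (n + i))}"

text \<open>Minimum distance (Inf of the empty set of naturals is 0, only relevant when k = 0).\<close>
definition min_dist :: "nat \<Rightarrow> (nat \<Rightarrow> bool) set \<Rightarrow> nat" where
  "min_dist n C = Inf (sweight n ` (C - symp_perp n C))"

end

theory Submission
  imports Defs "HOL-Library.Z2" "HOL-Library.FuncSet"
begin

(* For r x a and a x t matrices A and G over F_2, the span of the symplectic vectors
   (x, A x | A^T z + G w, z) contains the Lagrangian subspace w = 0 and hence its own
   symplectic complement: it is a stabilizer code with n = a + r and k = t. By a union bound,
   some A and G force every codeword of weight below d into that subspace, i.e. make it act
   trivially, as soon as V(n, d) < 2^r and V(n, d) 2^t < 2^a, where V(n, d) counts the words of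
   weight below d. Since V(n, delta n) <= 2^(beta n) with beta = delta (1 - ln delta) / ln 2,
   this yields rate 1 - 2 beta - o(1) at relative distance delta, and an elementary estimate
   gives 2 beta < (10/3) m delta + 2 / (2^m - 1). *)

section \<open>Bit vectors\<close>

(* keep sums and products of bits in ring form instead of rewriting them to XOR and AND *)
declare add_bit_eq_xor [simp del] mult_bit_eq_and [simp del]

lemma bit_add_self [simp]: "(x::bit) + x = 0"
  by (cases x) simp_all

lemma bit_add_eq_0_iff: "(x::bit) + y = 0 \<longleftrightarrow> x = y"
  by (cases x; cases y) simp_all

lemma bit_eq_add_imp: "(x::bit) = y + z \<Longrightarrow> z = x + y"
  by (cases x; cases y; cases z) simp_all

lemma bit_mult_eq_1_iff: "(x::bit) * y = 1 \<longleftrightarrow> x = 1 \<and> y = 1"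
  by (cases x; cases y) simp_all

lemma card_UNIV_bit: "card (UNIV :: bit set) = 2"
proof -
  have "(UNIV :: bit set) = {0, 1}" using bit_not_zero_iff by auto
  moreover have "card {0::bit, 1} = 2" by simp
  ultimately show ?thesis by metis
qed

lemma sum_bit_eq_odd_card:
  "finite J \<Longrightarrow> (\<Sum>k\<in>J. (b k :: bit)) = of_bool (odd (card {k\<in>J. b k = 1}))"
proof (induction J rule: finite_induct)
  case (insert x F)
  have "{k \<in> insert x F. b k = 1} = (if b x = 1 then insert x {k \<in> F. b k = 1} else {k \<in> F. b k = 1})"
    by auto
  with insert show ?case by (cases "b x = 1") (simp_all add: card_insert_if)
qed simp

definition bits_of :: "(nat \<Rightarrow> bool) \<Rightarrow> nat \<Rightarrow> bit" where
  "bits_of x = (\<lambda>i. of_bool (x i))"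

definition bools_of :: "(nat \<Rightarrow> bit) \<Rightarrow> nat \<Rightarrow> bool" where
  "bools_of X = (\<lambda>i. X i = 1)"

lemma bits_of_bools_of [simp]: "bits_of (bools_of X) = X"
proof
  show "bits_of (bools_of X) i = X i" for i
    unfolding bits_of_def bools_of_def by (cases "X i") simp_all
qed

lemma bools_of_bits_of [simp]: "bools_of (bits_of x) = x"
  unfolding bits_of_def bools_of_def by auto

lemma bools_of_inject: "bools_of X = bools_of Y \<longleftrightarrow> X = Y"
  by (metis bits_of_bools_of)

lemma vzero_eq_bools_of: "vzero = bools_of (\<lambda>_. 0)"
  unfolding vzero_def bools_of_def by simp

lemma vadd_bools_of: "vadd (bools_of X) (bools_of Y) = bools_of (\<lambda>i. X i + Y i)"
proof
  show "vadd (bools_of X) (bools_of Y) i = bools_of (\<lambda>i. X i + Y i) i" for i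
    unfolding vadd_def bools_of_def by (cases "X i"; cases "Y i") simp_all
qed

lemma vsum_bools_of_image:
  assumes "finite J" "inj_on f J" "\<And>k. k \<in> J \<Longrightarrow> f k = bools_of (F k)"
  shows "vsum (f ` J) = bools_of (\<lambda>i. \<Sum>k\<in>J. F k i)"
proof
  fix i
  have "card {x \<in> f ` J. x i} = card (f ` {k\<in>J. f k i})"
    by (rule arg_cong[where f = card]) auto
  also have "\<dots> = card {k\<in>J. f k i}"
    by (rule card_image) (rule inj_on_subset[OF assms(2)], auto)
  also have "{k\<in>J. f k i} = {k\<in>J. F k i = 1}"
    using assms(3) by (auto simp: bools_of_def)
  finally have "card {x \<in> f ` J. x i} = card {k\<in>J. F k i = 1}" .
  then show "vsum (f ` J) i = bools_of (\<lambda>i. \<Sum>k\<in>J. F k i) i"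
    unfolding vsum_def bools_of_def sum_bit_eq_odd_card[OF assms(1)] by (simp add: of_bool_def)
qed

lemma sum_bits_of_products:
  "(\<Sum>i<(n::nat). bits_of x (f i) * bits_of y (g i)) = of_bool (odd (card {i. i < n \<and> x (f i) \<and> y (g i)}))"
proof -
  have "(\<Sum>i<n. bits_of x (f i) * bits_of y (g i))
      = of_bool (odd (card {i\<in>{..<n}. bits_of x (f i) * bits_of y (g i) = 1}))"
    by (rule sum_bit_eq_odd_card) simp
  also have "{i\<in>{..<n}. bits_of x (f i) * bits_of y (g i) = 1} = {i. i < n \<and> x (f i) \<and> y (g i)}"
    by (auto simp: bits_of_def bit_mult_eq_1_iff)
  finally show ?thesis .
qed

lemma symp_orth_iff_sum_bits:
  "symp_orth n x y \<longleftrightarrow>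
     (\<Sum>i<n. bits_of x i * bits_of y (n+i) + bits_of x (n+i) * bits_of y i) = 0"
  unfolding symp_orth_def sum.distrib
  using sum_bits_of_products[where n=n and x=x and f="\<lambda>i. i" and y=y and g="\<lambda>i. n+i"]
        sum_bits_of_products[where n=n and x=x and f="\<lambda>i. n+i" and y=y and g="\<lambda>i. i"]
  by (auto simp: of_bool_def)

definition bitvecs :: "nat \<Rightarrow> (nat \<Rightarrow> bit) set" where
  "bitvecs n = {X. \<forall>i. n \<le> i \<longrightarrow> X i = 0}"

definition hamming_weight :: "nat \<Rightarrow> (nat \<Rightarrow> bit) \<Rightarrow> nat" where
  "hamming_weight n X = card {i. i < n \<and> X i \<noteq> 0}"

definition basis_vec :: "nat \<Rightarrow> nat \<Rightarrow> bit" where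
  "basis_vec k = (\<lambda>i. if i = k then 1 else 0)"

lemma basis_vec_in_bitvecs [simp]: "basis_vec k \<in> bitvecs n \<longleftrightarrow> k < n"
  by (auto simp: bitvecs_def basis_vec_def)

lemma zero_in_bitvecs [simp]: "(\<lambda>_. 0) \<in> bitvecs n"
  by (simp add: bitvecs_def)

lemma sum_mult_basis_vec_right:
  "finite S \<Longrightarrow> (\<Sum>i\<in>S. f i * basis_vec k i) = (if k \<in> S then f k else 0)"
  by (simp add: basis_vec_def if_distrib[of "\<lambda>b. _ * b"] cong: if_cong)

lemma sum_mult_basis_vec_left:
  "finite S \<Longrightarrow> (\<Sum>i\<in>S. basis_vec k i * f i) = (if k \<in> S then f k else 0)"
  using sum_mult_basis_vec_right[of S f k] by (simp add: mult.commute)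

lemma bij_betw_restrict_bitvecs:
  "bij_betw (\<lambda>X. restrict X {..<n}) (bitvecs n) (PiE {..<n} (\<lambda>_. UNIV))"
proof (rule bij_betw_imageI)
  show "inj_on (\<lambda>X. restrict X {..<n}) (bitvecs n)"
  proof (rule inj_onI)
    fix X Y assume XY: "X \<in> bitvecs n" "Y \<in> bitvecs n" "restrict X {..<n} = restrict Y {..<n}"
    show "X = Y"
    proof
      show "X i = Y i" for i
        using XY(1,2) fun_cong[OF XY(3), of i] by (cases "i < n") (simp_all add: bitvecs_def)
    qed
  qed
  have "F \<in> (\<lambda>X. restrict X {..<n}) ` bitvecs n" if F: "F \<in> PiE {..<n} (\<lambda>_. UNIV)" for F
  proof (rule image_eqI)
    show "F = restrict (\<lambda>i. if i < n then F i else 0) {..<n}"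
      using F by (auto simp: PiE_def extensional_def)
    show "(\<lambda>i. if i < n then F i else 0) \<in> bitvecs n"
      by (simp add: bitvecs_def)
  qed
  moreover have "(\<lambda>X. restrict X {..<n}) ` bitvecs n \<subseteq> PiE {..<n} (\<lambda>_. UNIV)"
    by (simp add: image_subset_iff)
  ultimately show "(\<lambda>X. restrict X {..<n}) ` bitvecs n = PiE {..<n} (\<lambda>_. UNIV)"
    by blast
qed

lemma card_bitvecs: "card (bitvecs n) = 2 ^ n"
proof -
  have "card (bitvecs n) = card (PiE {..<n} (\<lambda>_. UNIV :: bit set))"
    by (rule bij_betw_same_card[OF bij_betw_restrict_bitvecs])
  also have "\<dots> = (\<Prod>i<n. card (UNIV :: bit set))"
    by (rule card_PiE) simp
  also have "\<dots> = 2 ^ n"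
    by (simp only: card_UNIV_bit prod_constant card_lessThan)
  finally show ?thesis .
qed

lemma finite_bitvecs: "finite (bitvecs n)"
proof (rule ccontr)
  assume "infinite (bitvecs n)"
  then show False using card_bitvecs[of n] by simp
qed

section \<open>Counting solutions of linear equations\<close>

lemma card_bitvecs_linear_eq:
  assumes "i0 < T" "u i0 \<noteq> 0"
  shows "card {X\<in>bitvecs T. (\<Sum>i<T. X i * u i) = c} = 2 ^ (T - 1)"
proof -
  define S where "S c = {X\<in>bitvecs T. (\<Sum>i<T. X i * u i) = c}" for c
  define flip where "flip X = (\<lambda>i. X i + basis_vec i0 i)" for X :: "nat \<Rightarrow> bit"
  have inj: "inj_on flip A" for A
    by (rule inj_onI) (metis flip_def add.assoc bit_add_self add_0_right ext)
  have flip_sum: "(\<Sum>i<T. flip X i * u i) = (\<Sum>i<T. X i * u i) + 1" for X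
    using assms by (simp add: flip_def distrib_right sum.distrib sum_mult_basis_vec_left)
  have "flip X \<in> bitvecs T" if "X \<in> bitvecs T" for X
    using that assms(1) by (simp add: bitvecs_def flip_def basis_vec_def)
  then have maps: "flip ` S c \<subseteq> S (c + 1)" for c
    using flip_sum by (auto simp: S_def)
  have fin: "finite (S c)" for c
    unfolding S_def using finite_bitvecs by simp
  have le: "card (S c) \<le> card (S (c + 1))" for c
    by (rule card_inj_on_le[OF inj maps fin])
  have same: "card (S 0) = card (S 1)"
    using le[of 0] le[of 1] by simp
  have "S 0 \<union> S 1 = bitvecs T" "S 0 \<inter> S 1 = {}"
    unfolding S_def using bit_not_zero_iff by auto
  then have "card (S 0) + card (S 1) = 2 ^ T"
    using card_Un_disjoint[OF fin fin] card_bitvecs by metis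
  moreover have "(2::nat) ^ T = 2 * 2 ^ (T - 1)"
    using assms(1) by (simp flip: power_Suc)
  ultimately have "card (S 0) = 2 ^ (T - 1)" "card (S 1) = 2 ^ (T - 1)"
    using same by simp_all
  moreover have "c = 0 \<or> c = 1"
    by (cases c) simp_all
  ultimately show ?thesis
    unfolding S_def by blast
qed

definition bitmats :: "nat \<Rightarrow> nat \<Rightarrow> (nat \<Rightarrow> nat \<Rightarrow> bit) set" where
  "bitmats R T = PiE {..<R} (\<lambda>_. bitvecs T)"

lemma card_bitmats: "card (bitmats R T) = (2 ^ T) ^ R"
  unfolding bitmats_def by (simp add: card_PiE card_bitvecs)

lemma finite_bitmats: "finite (bitmats R T)"
  unfolding bitmats_def by (rule finite_PiE) (auto simp: finite_bitvecs)

lemma card_bitmats_linear_eqs: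
  assumes "i0 < T" "u i0 \<noteq> 0"
  shows "card {M\<in>bitmats R T. \<forall>j<R. (\<Sum>i<T. M j i * u i) = c j} = (2 ^ (T - 1)) ^ R"
proof -
  have "{M\<in>bitmats R T. \<forall>j<R. (\<Sum>i<T. M j i * u i) = c j}
        = PiE {..<R} (\<lambda>j. {X\<in>bitvecs T. (\<Sum>i<T. X i * u i) = c j})"
    unfolding bitmats_def by (auto simp: PiE_def Pi_def)
  then show ?thesis
    using card_bitvecs_linear_eq[where u=u and T=T, OF assms] by (simp add: card_PiE)
qed

lemma union_bound_avoid:
  assumes "finite I" "\<And>z. z \<in> I \<Longrightarrow> E z \<subseteq> M" "\<And>z. z \<in> I \<Longrightarrow> card (E z) \<le> K"
    and "finite M" "card I * K < card M"
  shows "\<exists>x\<in>M. \<forall>z\<in>I. x \<notin> E z"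
proof (rule ccontr)
  assume "\<not> ?thesis"
  then have "M \<subseteq> (\<Union>z\<in>I. E z)" by auto
  then have "card M \<le> card (\<Union>z\<in>I. E z)"
    using assms(1,2,4) by (intro card_mono) (auto intro: finite_subset)
  also have "\<dots> \<le> (\<Sum>z\<in>I. card (E z))" by (rule card_UN_le[OF assms(1)])
  also have "\<dots> \<le> card I * K" using sum_mono[of I _ "\<lambda>_. K"] assms(3) by simp
  finally show False using assms(5) by simp
qed

text \<open>A random R x T matrix solves the R equations M u = c with probability 2^-R
  when u is nonzero, hence fewer than 2^R such systems can be avoided simultaneously.\<close>

lemma exists_bitmat_avoiding:
  assumes "finite P" "card P < 2 ^ R" "\<And>p. p \<in> P \<Longrightarrow> \<exists>i<T. u p i \<noteq> 0"
  shows "\<exists>M\<in>bitmats R T. \<forall>p\<in>P. \<exists>j<R. (\<Sum>i<T. M j i * u p i) \<noteq> c p j"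
proof (cases "P = {}")
  case True
  have "bitmats R T \<noteq> {}"
    using card_bitmats[of R T] by auto
  with True show ?thesis by blast
next
  case False
  then obtain i0 where "i0 < T" using assms(3) by blast
  define E where "E p = {M\<in>bitmats R T. \<forall>j<R. (\<Sum>i<T. M j i * u p i) = c p j}" for p
  have "card (E p) = (2 ^ (T - 1)) ^ R" if p: "p \<in> P" for p
  proof -
    obtain i where "i < T" "u p i \<noteq> 0" using assms(3)[OF p] by blast
    then show ?thesis unfolding E_def by (rule card_bitmats_linear_eqs)
  qed
  moreover have "card P * (2 ^ (T - 1)) ^ R < card (bitmats R T)"
  proof -
    have "card P * (2 ^ (T - 1)) ^ R < 2 ^ R * (2 ^ (T - 1)) ^ R"
      using assms(2) by simp
    also have "\<dots> = (2 * 2 ^ (T - 1)) ^ R"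
      by (simp add: power_mult_distrib)
    also have "2 * 2 ^ (T - 1) = (2::nat) ^ T"
      using \<open>i0 < T\<close> by (simp flip: power_Suc)
    finally show ?thesis by (simp add: card_bitmats)
  qed
  ultimately obtain M where "M \<in> bitmats R T" "\<forall>p\<in>P. M \<notin> E p"
    using union_bound_avoid[of P E "bitmats R T" "(2 ^ (T - 1)) ^ R"] assms(1) finite_bitmats
    by (force simp: E_def)
  then show ?thesis
    unfolding E_def by auto
qed

section \<open>Bases of additive images\<close>

definition bit_additive :: "nat \<Rightarrow> ((nat \<Rightarrow> bit) \<Rightarrow> nat \<Rightarrow> bit) \<Rightarrow> bool" where
  "bit_additive D E \<longleftrightarrow>
     (\<forall>x\<in>bitvecs D. \<forall>y\<in>bitvecs D. E (\<lambda>i. x i + y i) = (\<lambda>i. E x i + E y i))"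

definition indicator_vec :: "nat set \<Rightarrow> nat \<Rightarrow> bit" where
  "indicator_vec J = (\<lambda>i. of_bool (i \<in> J))"

lemma bit_additive_zero: "bit_additive D E \<Longrightarrow> E (\<lambda>_. 0) = (\<lambda>_. 0)"
  unfolding bit_additive_def by (drule bspec[OF _ zero_in_bitvecs], drule bspec[OF _ zero_in_bitvecs]) simp

lemma bit_additive_indicator_vec:
  assumes add: "bit_additive D E" and "J \<subseteq> {..<D}"
  shows "E (indicator_vec J) = (\<lambda>i. \<Sum>k\<in>J. E (basis_vec k) i)"
proof -
  have "finite J" using finite_subset[OF assms(2)] by simp
  then show ?thesis using assms(2)
  proof (induction J rule: finite_induct)
    case empty
    then show ?case
      using bit_additive_zero[OF add] by (simp add: indicator_vec_def)
  next
    case (insert k F)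
    then have k: "basis_vec k \<in> bitvecs D" and F: "F \<subseteq> {..<D}" by auto
    have "indicator_vec F \<in> bitvecs D"
      using F by (auto simp: bitvecs_def indicator_vec_def)
    moreover have "indicator_vec (insert k F) = (\<lambda>i. basis_vec k i + indicator_vec F i)"
      using insert(2) by (auto simp: indicator_vec_def basis_vec_def)
    ultimately have "E (indicator_vec (insert k F)) = (\<lambda>i. E (basis_vec k) i + E (indicator_vec F) i)"
      using add k by (simp add: bit_additive_def)
    with insert.IH[OF F] insert(1,2) show ?case by simp
  qed
qed

lemma bit_additive_inj_on:
  assumes add: "bit_additive D E" and ker: "\<forall>x\<in>bitvecs D. E x = (\<lambda>_. 0) \<longrightarrow> x = (\<lambda>_. 0)"
  shows "inj_on E (bitvecs D)"
proof (rule inj_onI)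
  fix x y assume xy: "x \<in> bitvecs D" "y \<in> bitvecs D" "E x = E y"
  then have "E (\<lambda>i. x i + y i) = (\<lambda>_. 0)"
    using add by (simp add: bit_additive_def)
  moreover have "(\<lambda>i. x i + y i) \<in> bitvecs D" using xy by (simp add: bitvecs_def)
  ultimately have "(\<lambda>i. x i + y i) = (\<lambda>_. 0)" using ker by blast
  then show "x = y" by (simp add: fun_eq_iff bit_add_eq_0_iff)
qed

lemma bit_additive_inj_on_basis_vecs:
  assumes add: "bit_additive D E" and ker: "\<forall>x\<in>bitvecs D. E x = (\<lambda>_. 0) \<longrightarrow> x = (\<lambda>_. 0)"
  shows "inj_on (\<lambda>k. bools_of (E (basis_vec k))) {..<D}"
proof (rule inj_onI)
  fix k k' assume k: "k \<in> {..<D}" "k' \<in> {..<D}"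
    and "bools_of (E (basis_vec k)) = bools_of (E (basis_vec k'))"
  then have "E (basis_vec k) = E (basis_vec k')"
    by (simp add: bools_of_inject)
  then have "basis_vec k = basis_vec k'"
    by (rule inj_onD[OF bit_additive_inj_on[OF add ker]]) (use k in simp_all)
  then have "basis_vec k k = basis_vec k' k" by simp
  then show "k = k'" by (simp add: basis_vec_def split: if_splits)
qed

lemma vsum_bit_additive_basis_vecs:
  assumes add: "bit_additive D E" and ker: "\<forall>x\<in>bitvecs D. E x = (\<lambda>_. 0) \<longrightarrow> x = (\<lambda>_. 0)"
    and J: "J \<subseteq> {..<D}"
  shows "vsum ((\<lambda>k. bools_of (E (basis_vec k))) ` J) = bools_of (E (indicator_vec J))"
proof -
  have "vsum ((\<lambda>k. bools_of (E (basis_vec k))) ` J) = bools_of (\<lambda>i. \<Sum>k\<in>J. E (basis_vec k) i)"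
    by (rule vsum_bools_of_image)
      (use finite_subset[OF J] inj_on_subset[OF bit_additive_inj_on_basis_vecs[OF add ker] J] in simp_all)
  then show ?thesis
    by (simp only: bit_additive_indicator_vec[OF add J])
qed

lemma has_dim_bit_additive_image:
  assumes add: "bit_additive D E" and ker: "\<forall>x\<in>bitvecs D. E x = (\<lambda>_. 0) \<longrightarrow> x = (\<lambda>_. 0)"
  shows "has_dim (bools_of ` E ` bitvecs D) D"
proof -
  define f where "f k = bools_of (E (basis_vec k))" for k
  have inj: "inj_on f {..<D}"
    unfolding f_def by (rule bit_additive_inj_on_basis_vecs[OF add ker])
  have vsum: "vsum (f ` J) = bools_of (E (indicator_vec J))" if "J \<subseteq> {..<D}" for J
    unfolding f_def by (rule vsum_bit_additive_basis_vecs[OF add ker that])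
  have indicator_vec_in: "indicator_vec J \<in> bitvecs D" if "J \<subseteq> {..<D}" for J
    using that by (auto simp: bitvecs_def indicator_vec_def)
  show ?thesis
    unfolding has_dim_def
  proof (rule exI[of _ "f ` {..<D}"], intro conjI allI ballI impI)
    show "finite (f ` {..<D})" "f ` {..<D} \<subseteq> bools_of ` E ` bitvecs D"
      by (auto simp: f_def)
    show "card (f ` {..<D}) = D" using card_image[OF inj] by simp
  next
    fix S assume S: "S \<subseteq> f ` {..<D}" "S \<noteq> {}"
    then obtain J where J: "J \<subseteq> {..<D}" "S = f ` J" "J \<noteq> {}"
      by (auto simp: subset_image_iff)
    then have "indicator_vec J \<noteq> (\<lambda>_. 0)"
      by (auto simp: indicator_vec_def fun_eq_iff)
    then have "E (indicator_vec J) \<noteq> (\<lambda>_. 0)"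
      using ker indicator_vec_in[OF J(1)] by blast
    then show "vsum S \<noteq> vzero"
      by (simp add: J(2) vsum[OF J(1)] vzero_eq_bools_of bools_of_inject)
  next
    fix x assume "x \<in> bools_of ` E ` bitvecs D"
    then obtain c where c: "c \<in> bitvecs D" "x = bools_of (E c)" by auto
    have J: "{k\<in>{..<D}. c k = 1} \<subseteq> {..<D}" by auto
    have "indicator_vec {k\<in>{..<D}. c k = 1} = c"
      using c(1) by (auto simp: indicator_vec_def bitvecs_def fun_eq_iff not_less[symmetric])
    then have "x = vsum (f ` {k\<in>{..<D}. c k = 1})"
      using vsum[OF J] c(2) by simp
    then show "\<exists>S\<subseteq>f ` {..<D}. x = vsum S"
      using J by blast
  qed
qed

section \<open>The code construction\<close>

lemma hamming_weight_le_sweight_x: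
  "hamming_weight n (\<lambda>i. if i < n then X i else 0) \<le> sweight n (bools_of X)"
  unfolding hamming_weight_def sweight_def by (rule card_mono) (auto simp: bools_of_def)

lemma hamming_weight_le_sweight_z:
  "hamming_weight n (\<lambda>i. if i < n then X (n + i) else 0) \<le> sweight n (bools_of X)"
  unfolding hamming_weight_def sweight_def by (rule card_mono) (auto simp: bools_of_def)

lemma sum_lessThan_add_split: "(\<Sum>i<a + (r::nat). f i) = (\<Sum>i<a. f i) + (\<Sum>j<r. f (a + j))"
  by (induction r) (simp_all add: add.assoc)

lemma sum_symp_pairing_blocks:
  "(\<Sum>i<a+r. X i * Y (a+r+i) + X (a+r+i) * Y i) =
    (\<Sum>i<a. X i * Y (a+r+i)) + (\<Sum>j<r. X (a+j) * Y (a+r+(a+j))) +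
    ((\<Sum>i<a. X (a+r+i) * Y i) + (\<Sum>j<r. X (a+r+(a+j)) * Y (a+j)))"
  for X Y :: "nat \<Rightarrow> 'a::comm_semiring_1"
  by (simp only: sum.distrib sum_lessThan_add_split add.assoc add.left_commute)

lemma symp_blocks_ext:
  fixes f g :: "nat \<Rightarrow> 'a"
  assumes "\<And>i. i < a \<Longrightarrow> f i = g i" "\<And>j. j < r \<Longrightarrow> f (a + j) = g (a + j)"
    and "\<And>i. i < a \<Longrightarrow> f (a + r + i) = g (a + r + i)"
    and "\<And>j. j < r \<Longrightarrow> f (a + r + (a + j)) = g (a + r + (a + j))"
    and "\<And>i. 2 * (a + r) \<le> i \<Longrightarrow> f i = g i"
  shows "f = g"
proof
  fix i
  consider "i < a" | "a \<le> i" "i < a + r" | "a + r \<le> i" "i < a + r + a"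
    | "a + r + a \<le> i" "i < 2 * (a + r)" | "2 * (a + r) \<le> i"
    by linarith
  then show "f i = g i"
  proof cases
    case 2
    then show ?thesis using assms(2)[of "i - a"] by simp
  next
    case 3
    then show ?thesis using assms(3)[of "i - (a + r)"] by simp
  next
    case 4
    then show ?thesis using assms(4)[of "i - (a + r + a)"] by (simp add: add.assoc)
  qed (use assms(1,5) in auto)
qed

text \<open>For c = (x, z, w) in F_2^a x F_2^r x F_2^t, stored in the coordinates
  [0, a), [a, a + r) and [a + r, a + r + t) of c, enc c is the symplectic vector
  (x, A x | A^T z + G w, z) of length 2(a + r). The vectors with w = 0 form a
  Lagrangian subspace, which is why the code contains its symplectic complement;
  A keeps the X-parts of codewords heavy and G the Z-parts modulo this subspace.\<close>

locale symplectic_graph_code =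
  fixes A G :: "nat \<Rightarrow> nat \<Rightarrow> bit" and a r t :: nat
begin

definition enc :: "(nat \<Rightarrow> bit) \<Rightarrow> nat \<Rightarrow> bit" where
  "enc c = (\<lambda>i. if i < a then c i
     else if i < a + r then (\<Sum>i'<a. A (i - a) i' * c i')
     else if i < a + r + a then
       (\<Sum>j<r. A j (i - (a + r)) * c (a + j)) + (\<Sum>l<t. G (i - (a + r)) l * c (a + r + l))
     else if i < 2 * (a + r) then c (i - (a + r))
     else 0)"

definition code :: "(nat \<Rightarrow> bool) set" where
  "code = bools_of ` enc ` bitvecs (a + r + t)"

definition x_distance :: "nat \<Rightarrow> bool" where
  "x_distance d \<longleftrightarrow> (\<forall>z\<in>bitvecs (a + r). hamming_weight (a + r) z < d \<longrightarrow>
      (\<forall>j<r. z (a + j) = (\<Sum>i<a. A j i * z i)) \<longrightarrow> (\<forall>i<a. z i = 0))"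

definition z_distance :: "nat \<Rightarrow> bool" where
  "z_distance d \<longleftrightarrow> (\<forall>z\<in>bitvecs (a + r). hamming_weight (a + r) z < d \<longrightarrow> (\<forall>w\<in>bitvecs t.
      (\<forall>i<a. z i = (\<Sum>j<r. A j i * z (a + j)) + (\<Sum>l<t. G i l * w l)) \<longrightarrow> (\<forall>l<t. w l = 0)))"

lemma enc_x: "i < a \<Longrightarrow> enc c i = c i"
  unfolding enc_def by simp

lemma enc_Ax: "j < r \<Longrightarrow> enc c (a + j) = (\<Sum>i<a. A j i * c i)"
  unfolding enc_def by simp

lemma enc_ATz_Gw:
  "i < a \<Longrightarrow> enc c (a + r + i) = (\<Sum>j<r. A j i * c (a + j)) + (\<Sum>l<t. G i l * c (a + r + l))"
  unfolding enc_def by simp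

lemma enc_z: "j < r \<Longrightarrow> enc c (a + r + (a + j)) = c (a + j)"
  unfolding enc_def by simp

lemma enc_outside: "2 * (a + r) \<le> i \<Longrightarrow> enc c i = 0"
  unfolding enc_def by simp

lemma bit_additive_enc: "bit_additive D enc"
  unfolding bit_additive_def enc_def
  by (simp add: fun_eq_iff distrib_left sum.distrib)

lemma code_subspace: "is_subspace (a + r) code"
  unfolding is_subspace_def
proof (intro conjI ballI)
  show "code \<subseteq> vecs (a + r)"
    unfolding code_def vecs_def bools_of_def by (auto simp: enc_outside)
  show "vzero \<in> code"
    unfolding code_def vzero_eq_bools_of
    using bit_additive_zero[OF bit_additive_enc] zero_in_bitvecs by (metis image_eqI)
next
  fix x y assume "x \<in> code" "y \<in> code"
  then obtain c c' where c: "c \<in> bitvecs (a + r + t)" "x = bools_of (enc c)"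
    and c': "c' \<in> bitvecs (a + r + t)" "y = bools_of (enc c')"
    unfolding code_def by blast
  then have "vadd x y = bools_of (enc (\<lambda>i. c i + c' i))"
    using bit_additive_enc by (simp add: vadd_bools_of bit_additive_def)
  moreover have "(\<lambda>i. c i + c' i) \<in> bitvecs (a + r + t)"
    using c c' by (simp add: bitvecs_def)
  ultimately show "vadd x y \<in> code"
    unfolding code_def by blast
qed

lemma symp_pairing_enc:
  "(\<Sum>i<a+r. enc c i * Y (a+r+i) + enc c (a+r+i) * Y i) =
    (\<Sum>i<a. c i * Y (a+r+i)) + (\<Sum>j<r. (\<Sum>i'<a. A j i' * c i') * Y (a+r+(a+j))) +
    ((\<Sum>i<a. ((\<Sum>j<r. A j i * c (a + j)) + (\<Sum>l<t. G i l * c (a + r + l))) * Y i)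
      + (\<Sum>j<r. c (a+j) * Y (a+j)))"
  unfolding sum_symp_pairing_blocks
  by (simp add: enc_x enc_Ax enc_ATz_Gw enc_z)

lemma symp_perp_code_ATz:
  assumes "y \<in> symp_perp (a + r) code" "i0 < a"
  shows "bits_of y (a + r + i0) = (\<Sum>j<r. A j i0 * bits_of y (a + r + (a + j)))"
proof -
  have "basis_vec i0 \<in> bitvecs (a + r + t)" using assms(2) by simp
  then have "symp_orth (a + r) (bools_of (enc (basis_vec i0))) y"
    using assms(1) unfolding code_def symp_perp_def by blast
  then have "(\<Sum>i<a+r. enc (basis_vec i0) i * bits_of y (a+r+i) + enc (basis_vec i0) (a+r+i) * bits_of y i) = 0"
    by (simp add: symp_orth_iff_sum_bits)
  moreover have "basis_vec i0 (a + j) = 0" "basis_vec i0 (a + r + l) = 0" for j l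
    using assms(2) by (simp_all add: basis_vec_def)
  ultimately have "bits_of y (a + r + i0) + (\<Sum>j<r. A j i0 * bits_of y (a + r + (a + j))) = 0"
    using assms(2) unfolding symp_pairing_enc
    by (simp add: sum_mult_basis_vec_left sum_mult_basis_vec_right)
  then show ?thesis by (simp add: bit_add_eq_0_iff)
qed

lemma symp_perp_code_Ax:
  assumes "y \<in> symp_perp (a + r) code" "j0 < r"
  shows "bits_of y (a + j0) = (\<Sum>i<a. A j0 i * bits_of y i)"
proof -
  have "basis_vec (a + j0) \<in> bitvecs (a + r + t)" using assms(2) by simp
  then have "symp_orth (a + r) (bools_of (enc (basis_vec (a + j0)))) y"
    using assms(1) unfolding code_def symp_perp_def by blast
  then have "(\<Sum>i<a+r. enc (basis_vec (a + j0)) i * bits_of y (a+r+i)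
      + enc (basis_vec (a + j0)) (a+r+i) * bits_of y i) = 0"
    by (simp add: symp_orth_iff_sum_bits)
  moreover have "basis_vec (a + j0) (a + j) = basis_vec j0 j" for j
    by (simp add: basis_vec_def)
  moreover have "basis_vec (a + j0) i = 0" if "i < a" for i
    using that by (simp add: basis_vec_def)
  moreover have "basis_vec (a + j0) (a + r + l) = 0" for l
    using assms(2) by (simp add: basis_vec_def)
  ultimately have "(\<Sum>i<a. A j0 i * bits_of y i) + bits_of y (a + j0) = 0"
    using assms(2) unfolding symp_pairing_enc
    by (simp add: sum_mult_basis_vec_left sum_mult_basis_vec_right)
  then show ?thesis by (simp add: bit_add_eq_0_iff)
qed

lemma symp_perp_code_subset: "symp_perp (a + r) code \<subseteq> code"
proof
  fix y assume y: "y \<in> symp_perp (a + r) code"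
  define c where "c = (\<lambda>i. if i < a then bits_of y i else if i < a + r then bits_of y (a + r + i) else 0)"
  have "enc c = bits_of y"
  proof (rule symp_blocks_ext)
    show "enc c (a + j) = bits_of y (a + j)" if "j < r" for j
      using that symp_perp_code_Ax[OF y that] by (simp add: enc_Ax c_def)
    show "enc c (a + r + i) = bits_of y (a + r + i)" if "i < a" for i
    proof -
      have "enc c (a + r + i) = (\<Sum>j<r. A j i * c (a + j)) + (\<Sum>l<t. G i l * c (a + r + l))"
        using that by (rule enc_ATz_Gw)
      also have "\<dots> = (\<Sum>j<r. A j i * bits_of y (a + r + (a + j)))"
        by (simp add: c_def)
      finally show ?thesis
        using symp_perp_code_ATz[OF y that] by simp
    qed
    show "enc c i = bits_of y i" if "2 * (a + r) \<le> i" for i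
      using that y by (simp add: enc_outside symp_perp_def vecs_def bits_of_def)
  qed (simp_all add: enc_x enc_z c_def)
  moreover have "c \<in> bitvecs (a + r + t)"
    by (simp add: bitvecs_def c_def)
  ultimately show "y \<in> code"
    unfolding code_def by (metis bools_of_bits_of image_eqI)
qed

lemma light_codeword_coeffs:
  assumes "x_distance d" "z_distance d" "c \<in> bitvecs (a + r + t)"
    and light: "sweight (a + r) (bools_of (enc c)) < d"
  shows "\<forall>i<a. c i = 0" "\<forall>l<t. c (a + r + l) = 0"
proof -
  define zx where "zx = (\<lambda>i. if i < a + r then enc c i else 0)"
  define zz where "zz = (\<lambda>i. if i < a + r then enc c (a + r + i) else 0)"
  define w where "w = (\<lambda>l. if l < t then c (a + r + l) else 0)"
  have in_bitvecs: "zx \<in> bitvecs (a + r)" "zz \<in> bitvecs (a + r)" "w \<in> bitvecs t"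
    by (simp_all add: zx_def zz_def w_def bitvecs_def)
  have light_parts: "hamming_weight (a + r) zx < d" "hamming_weight (a + r) zz < d"
    using hamming_weight_le_sweight_x[of "a + r" "enc c"] hamming_weight_le_sweight_z[of "a + r" "enc c"]
      light unfolding zx_def zz_def by linarith+
  have "\<forall>j<r. zx (a + j) = (\<Sum>i<a. A j i * zx i)"
    by (simp add: zx_def enc_x enc_Ax)
  then have "\<forall>i<a. zx i = 0"
    using assms(1) in_bitvecs(1) light_parts(1) unfolding x_distance_def by blast
  moreover have "\<forall>i<a. zz i = (\<Sum>j<r. A j i * zz (a + j)) + (\<Sum>l<t. G i l * w l)"
    by (simp add: zz_def w_def enc_ATz_Gw enc_z)
  then have "\<forall>l<t. w l = 0"
    using assms(2) in_bitvecs(2,3) light_parts(2) unfolding z_distance_def by blast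
  ultimately show "\<forall>i<a. c i = 0" "\<forall>l<t. c (a + r + l) = 0"
    by (simp_all add: zx_def w_def enc_x)
qed

text \<open>Codewords with x = 0 and w = 0 lie in the Lagrangian subspace and pair
  trivially with the rows of G, which are pure Z-vectors.\<close>

lemma enc_in_symp_perp_code:
  assumes "\<forall>i<a. c i = 0" "\<forall>l<t. c (a + r + l) = 0"
  shows "bools_of (enc c) \<in> symp_perp (a + r) code"
  unfolding symp_perp_def
proof (intro CollectI conjI ballI)
  show "bools_of (enc c) \<in> vecs (a + r)"
    unfolding vecs_def bools_of_def by (auto simp: enc_outside)
next
  fix x assume "x \<in> code"
  then obtain c' where c': "x = bools_of (enc c')" unfolding code_def by blast
  have enc_head: "enc c i = 0" if "i < a + r" for i
  proof (cases "i < a")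
    case False
    with that obtain j where "i = a + j" "j < r" by (metis add_diff_inverse_nat add_less_cancel_left)
    then show ?thesis using assms(1) by (simp add: enc_Ax)
  qed (use assms(1) in \<open>simp add: enc_x\<close>)
  have "(\<Sum>i<a. c' i * (\<Sum>j<r. A j i * c (a + j))) = (\<Sum>j<r. (\<Sum>i<a. A j i * c' i) * c (a + j))"
    by (simp add: sum_distrib_left sum_distrib_right ac_simps sum.swap[of _ "{..<a}"])
  then have "(\<Sum>i<a+r. enc c' i * enc c (a+r+i) + enc c' (a+r+i) * enc c i) = 0"
    unfolding symp_pairing_enc using assms(2)
    by (simp add: enc_head enc_ATz_Gw enc_z)
  then show "symp_orth (a + r) x (bools_of (enc c))"
    unfolding c' symp_orth_iff_sum_bits by simp
qed

lemma enc_kernel: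
  assumes "x_distance d" "z_distance d" "1 \<le> d"
  shows "\<forall>c\<in>bitvecs (a + r + t). enc c = (\<lambda>_. 0) \<longrightarrow> c = (\<lambda>_. 0)"
proof (intro ballI impI)
  fix c assume c: "c \<in> bitvecs (a + r + t)" and "enc c = (\<lambda>_. 0)"
  then have "sweight (a + r) (bools_of (enc c)) < d"
    using assms(3) by (simp add: sweight_def bools_of_def)
  then have "\<forall>i<a. c i = 0" "\<forall>l<t. c (a + r + l) = 0"
    using light_codeword_coeffs[OF assms(1,2) c] by blast+
  moreover have "\<forall>j<r. c (a + j) = 0"
    using enc_z[of _ c] \<open>enc c = (\<lambda>_. 0)\<close> by simp
  ultimately have "c i = 0" for i
    using c by (cases "i < a"; cases "i < a + r"; cases "i < a + r + t")
      (auto simp: bitvecs_def dest: spec[of _ "i - a"] spec[of _ "i - (a + r)"])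
  then show "c = (\<lambda>_. 0)" by blast
qed

lemma stabilizer_code_code:
  assumes "x_distance d" "z_distance d" "1 \<le> d"
  shows "stabilizer_code (a + r) t code"
  unfolding stabilizer_code_def code_def
  using code_subspace symp_perp_code_subset has_dim_bit_additive_image[OF bit_additive_enc enc_kernel[OF assms]]
  by (simp add: code_def add.assoc)

lemma enc_logical_not_in_symp_perp:
  assumes "x_distance d" "z_distance d" "1 \<le> d" "1 \<le> t"
  shows "bools_of (enc (basis_vec (a + r))) \<notin> symp_perp (a + r) code"
proof
  let ?e = "basis_vec (a + r)"
  assume perp: "bools_of (enc ?e) \<in> symp_perp (a + r) code"
  have "enc ?e = (\<lambda>_. 0)"
  proof (rule symp_blocks_ext)
    show "enc ?e i = 0" if "i < a" for i
      using that by (simp add: enc_x basis_vec_def)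
    show "enc ?e (a + j) = 0" if "j < r" for j
      using that by (simp add: enc_Ax basis_vec_def)
    show "enc ?e (a + r + i) = 0" if "i < a" for i
      using symp_perp_code_ATz[OF perp that] by (simp add: enc_z basis_vec_def)
    show "enc ?e (a + r + (a + j)) = 0" if "j < r" for j
      using that by (simp add: enc_z basis_vec_def)
    show "enc ?e i = 0" if "2 * (a + r) \<le> i" for i
      using that by (rule enc_outside)
  qed
  moreover have "?e \<in> bitvecs (a + r + t)"
    using assms(4) by simp
  moreover have "?e \<noteq> (\<lambda>_. 0)"
    by (auto simp: fun_eq_iff basis_vec_def)
  ultimately show False
    using enc_kernel[OF assms(1-3)] by blast
qed

lemma min_dist_code_ge:
  assumes "x_distance d" "z_distance d" "1 \<le> d" "1 \<le> t"
  shows "d \<le> min_dist (a + r) code"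
  unfolding min_dist_def
proof (rule cInf_greatest)
  show "sweight (a + r) ` (code - symp_perp (a + r) code) \<noteq> {}"
  proof -
    have "bools_of (enc (basis_vec (a + r))) \<in> code"
      using assms(4) by (simp add: code_def)
    then show ?thesis
      using enc_logical_not_in_symp_perp[OF assms] by blast
  qed
next
  fix s assume "s \<in> sweight (a + r) ` (code - symp_perp (a + r) code)"
  then obtain c where c: "c \<in> bitvecs (a + r + t)" "bools_of (enc c) \<notin> symp_perp (a + r) code"
    and s: "s = sweight (a + r) (bools_of (enc c))"
    unfolding code_def by blast
  show "d \<le> s"
  proof (rule ccontr)
    assume "\<not> d \<le> s"
    then show False
      using c light_codeword_coeffs[OF assms(1,2) c(1)] enc_in_symp_perp_code s by auto
  qed
qed

end

definition hamming_ball_card :: "nat \<Rightarrow> nat \<Rightarrow> nat" where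
  "hamming_ball_card n d = card {z\<in>bitvecs n. hamming_weight n z < d}"

lemma exists_x_distance:
  assumes "hamming_ball_card (a + r) d < 2 ^ r"
  shows "\<exists>A. symplectic_graph_code.x_distance A a r d"
proof -
  define P where "P = {z\<in>bitvecs (a + r). hamming_weight (a + r) z < d \<and> (\<exists>i<a. z i \<noteq> 0)}"
  have fin: "finite P"
    unfolding P_def using finite_bitvecs by simp
  have card: "card P < 2 ^ r"
  proof -
    have "card P \<le> hamming_ball_card (a + r) d"
      unfolding hamming_ball_card_def P_def by (rule card_mono) (use finite_bitvecs in auto)
    with assms show ?thesis by linarith
  qed
  have nonzero: "\<exists>i<a. z i \<noteq> 0" if "z \<in> P" for z
    using that by (simp add: P_def)
  obtain M where M: "\<forall>z\<in>P. \<exists>j<r. (\<Sum>i<a. M j i * z i) \<noteq> z (a + j)"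
    using exists_bitmat_avoiding[where u = "\<lambda>z. z" and c = "\<lambda>z j. z (a + j)", OF fin card nonzero] by blast
  have "symplectic_graph_code.x_distance M a r d"
    unfolding symplectic_graph_code.x_distance_def
  proof (intro ballI impI allI)
    fix z i
    assume z: "z \<in> bitvecs (a + r)" "hamming_weight (a + r) z < d"
      and rel: "\<forall>j<r. z (a + j) = (\<Sum>i<a. M j i * z i)" and "i < a"
    have "z \<notin> P"
    proof
      assume "z \<in> P"
      then obtain j where "j < r" "(\<Sum>i<a. M j i * z i) \<noteq> z (a + j)" using M by blast
      with rel show False by simp
    qed
    then show "z i = 0"
      using z \<open>i < a\<close> unfolding P_def by blast
  qed
  then show ?thesis by blast
qed

lemma exists_z_distance:
  assumes "hamming_ball_card (a + r) d * 2 ^ t < 2 ^ a"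
  shows "\<exists>G. symplectic_graph_code.z_distance A G a r t d"
proof -
  define L where "L = {z\<in>bitvecs (a + r). hamming_weight (a + r) z < d}"
  define P where "P = {(z, w). z \<in> L \<and> w \<in> bitvecs t \<and> (\<exists>l<t. w l \<noteq> 0)}"
  have sub: "P \<subseteq> L \<times> bitvecs t"
    unfolding P_def by auto
  have "finite (L \<times> bitvecs t)"
    unfolding L_def using finite_bitvecs by simp
  then have fin: "finite P" using sub finite_subset by blast
  have card: "card P < 2 ^ a"
  proof -
    have "card P \<le> card (L \<times> bitvecs t)"
      by (rule card_mono[OF \<open>finite (L \<times> bitvecs t)\<close> sub])
    also have "\<dots> = hamming_ball_card (a + r) d * 2 ^ t"
      by (simp add: L_def hamming_ball_card_def card_bitvecs card_cartesian_product)
    finally show ?thesis using assms by linarith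
  qed
  have nonzero: "\<exists>l<t. snd p l \<noteq> 0" if "p \<in> P" for p
    using that unfolding P_def by auto
  obtain M where
    M: "\<forall>p\<in>P. \<exists>i<a. (\<Sum>l<t. M i l * snd p l) \<noteq> fst p i + (\<Sum>j<r. A j i * fst p (a + j))"
    using exists_bitmat_avoiding[where u = snd and c = "\<lambda>p i. fst p i + (\<Sum>j<r. A j i * fst p (a + j))",
        OF fin card nonzero]
    by blast
  have "symplectic_graph_code.z_distance A M a r t d"
    unfolding symplectic_graph_code.z_distance_def
  proof (intro ballI impI allI)
    fix z w l
    assume z: "z \<in> bitvecs (a + r)" "hamming_weight (a + r) z < d" and w: "w \<in> bitvecs t"
      and rel: "\<forall>i<a. z i = (\<Sum>j<r. A j i * z (a + j)) + (\<Sum>l<t. M i l * w l)" and "l < t"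
    have "\<forall>i<a. (\<Sum>l<t. M i l * w l) = z i + (\<Sum>j<r. A j i * z (a + j))"
      using rel bit_eq_add_imp by blast
    then have "(z, w) \<notin> P" using M by force
    then show "w l = 0"
      using z w \<open>l < t\<close> unfolding P_def L_def by auto
  qed
  then show ?thesis by blast
qed

text \<open>With V(n, d) \<le> 2^s, the choice r = s + 1, a = n - r, t = n - 2s - 2 satisfies
  both counting conditions.\<close>

lemma stabilizer_code_exists:
  assumes "1 \<le> d" "hamming_ball_card n d \<le> 2 ^ s" "2 * s + 3 \<le> n"
  shows "\<exists>C. stabilizer_code n (n - (2 * s + 2)) C \<and> d \<le> min_dist n C"
proof -
  define r where "r = s + 1"
  define a where "a = n - (s + 1)"
  define t where "t = n - (2 * s + 2)"
  have n: "a + r = n" and t: "1 \<le> t" and st: "s + t < a"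
    using assms(3) unfolding a_def r_def t_def by simp_all
  have "(2::nat) ^ s < 2 ^ r" by (simp add: r_def)
  then have "hamming_ball_card (a + r) d < 2 ^ r"
    using assms(2) unfolding n by linarith
  then obtain A where A: "symplectic_graph_code.x_distance A a r d"
    using exists_x_distance by blast
  have "hamming_ball_card (a + r) d * 2 ^ t \<le> 2 ^ s * 2 ^ t"
    using assms(2) unfolding n by simp
  also have "\<dots> < 2 ^ a"
    using st by (simp flip: power_add)
  finally obtain G where G: "symplectic_graph_code.z_distance A G a r t d"
    using exists_z_distance by blast
  show ?thesis
    using symplectic_graph_code.stabilizer_code_code[OF A G assms(1)]
      symplectic_graph_code.min_dist_code_ge[OF A G assms(1) t]
    unfolding n t_def by blast
qed

section \<open>Hamming balls and the asymptotic rate\<close>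

lemma hamming_ball_card_1_le: "hamming_ball_card n 1 \<le> 1"
proof -
  have "z = (\<lambda>_. 0)" if "z \<in> bitvecs n" "hamming_weight n z < 1" for z
  proof
    fix i
    have "{i. i < n \<and> z i \<noteq> 0} = {}"
      using that(2) by (simp add: hamming_weight_def)
    then show "z i = 0"
      using that(1) by (cases "i < n") (auto simp: bitvecs_def)
  qed
  then have "{z\<in>bitvecs n. hamming_weight n z < 1} \<subseteq> {\<lambda>_. 0}" by blast
  then have "hamming_ball_card n 1 \<le> card {(\<lambda>_. 0) :: nat \<Rightarrow> bit}"
    unfolding hamming_ball_card_def by (rule card_mono[rotated]) simp
  then show ?thesis by simp
qed

lemma hamming_ball_card_le_sum_choose: "hamming_ball_card n d \<le> (\<Sum>j<d. n choose j)"
proof -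
  define L where "L = {z\<in>bitvecs n. hamming_weight n z < d}"
  define supp where "supp z = {i. i < n \<and> z i \<noteq> (0::bit)}" for z
  have "inj_on supp L"
  proof (rule inj_onI)
    fix z z' assume zz': "z \<in> L" "z' \<in> L" "supp z = supp z'"
    show "z = z'"
    proof
      fix i
      show "z i = z' i"
      proof (cases "i < n")
        case True
        then have "z i \<noteq> 0 \<longleftrightarrow> z' i \<noteq> 0"
          using zz'(3) by (auto simp: supp_def set_eq_iff)
        then show ?thesis by (metis bit_not_zero_iff)
      next
        case False
        then show ?thesis using zz'(1,2) by (simp add: L_def bitvecs_def)
      qed
    qed
  qed
  then have "hamming_ball_card n d = card (supp ` L)"
    by (simp add: hamming_ball_card_def L_def card_image)
  also have "\<dots> \<le> card (\<Union>j<d. {S. S \<subseteq> {..<n} \<and> card S = j})"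
    by (rule card_mono) (auto simp: L_def supp_def hamming_weight_def intro: finite_subset[of _ "Pow {..<n}"])
  also have "\<dots> \<le> (\<Sum>j<d. card {S. S \<subseteq> {..<n} \<and> card S = j})"
    by (rule card_UN_le) simp
  also have "\<dots> = (\<Sum>j<d. n choose j)"
    by (simp add: n_subsets)
  finally show ?thesis .
qed

lemma sum_choose_le_exp_div_powr:
  fixes \<delta> :: real
  assumes "0 < \<delta>" "\<delta> \<le> 1"
  shows "real (\<Sum>j<nat \<lceil>\<delta> * n\<rceil>. n choose j) \<le> exp (\<delta> * n) / \<delta> powr (\<delta> * n)"
proof -
  define d where "d = nat \<lceil>\<delta> * n\<rceil>"
  have "d \<le> n"
    using assms(2) mult_right_mono[of \<delta> 1 "real n"] unfolding d_def by simp
  have "\<delta> powr (\<delta> * n) * real (\<Sum>j<d. n choose j) = (\<Sum>j<d. real (n choose j) * \<delta> powr (\<delta> * n))"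
    by (simp add: sum_distrib_left mult.commute)
  also have "\<dots> \<le> (\<Sum>j<d. real (n choose j) * \<delta> ^ j)"
  proof (rule sum_mono)
    fix j assume "j \<in> {..<d}"
    then have "int j < \<lceil>\<delta> * n\<rceil>"
      unfolding d_def by simp
    then have "real j \<le> \<delta> * n"
      by (simp only: less_ceiling_iff)
    then have "\<delta> powr (\<delta> * n) \<le> \<delta> ^ j"
      using assms powr_mono'[of j "\<delta> * n" \<delta>] by (simp add: powr_realpow)
    then show "real (n choose j) * \<delta> powr (\<delta> * n) \<le> real (n choose j) * \<delta> ^ j"
      by (simp add: mult_left_mono)
  qed
  also have "\<dots> \<le> (\<Sum>j\<le>n. real (n choose j) * \<delta> ^ j)"
    by (rule sum_mono2) (use \<open>d \<le> n\<close> assms in auto)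
  also have "\<dots> = (\<delta> + 1) ^ n"
    by (simp add: binomial_ring[of \<delta> 1 n] mult.commute)
  also have "\<dots> \<le> exp \<delta> ^ n"
    using assms by (intro power_mono) (auto simp: add.commute)
  also have "\<dots> = exp (\<delta> * n)"
    by (simp add: exp_of_nat_mult[symmetric] mult.commute)
  finally show ?thesis
    unfolding d_def using assms(1) by (simp add: field_simps)
qed

text \<open>An upper bound for the binary entropy function (with ln 0 = 0 it vanishes at 0).\<close>

definition ball_exponent :: "real \<Rightarrow> real" where
  "ball_exponent \<delta> = \<delta> * (1 - ln \<delta>) / ln 2"

lemma ball_exponent_nonneg:
  assumes "0 \<le> \<delta>" "\<delta> \<le> 1"
  shows "0 \<le> ball_exponent \<delta>"
proof (cases "\<delta> = 0")
  case False
  then have "ln \<delta> \<le> 0" using assms by simp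
  then show ?thesis
    using assms unfolding ball_exponent_def by (simp add: divide_nonneg_pos)
qed (simp add: ball_exponent_def)

lemma hamming_ball_card_le_ball_exponent:
  assumes "0 \<le> \<delta>" "\<delta> \<le> 1"
  shows "hamming_ball_card n (max 1 (nat \<lceil>\<delta> * n\<rceil>)) \<le> 2 ^ nat \<lceil>ball_exponent \<delta> * n\<rceil>"
proof (cases "\<delta> = 0 \<or> n = 0")
  case True
  then have "hamming_ball_card n (max 1 (nat \<lceil>\<delta> * n\<rceil>)) \<le> 1"
    using hamming_ball_card_1_le[of n] by auto
  also have "(1::nat) \<le> 2 ^ nat \<lceil>ball_exponent \<delta> * n\<rceil>" by simp
  finally show ?thesis .
next
  case False
  then have "0 < \<delta>" "0 < \<delta> * n"
    using assms(1) by (simp_all add: less_eq_real_def)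
  then have "0 < nat \<lceil>\<delta> * n\<rceil>" by simp
  then have "max 1 (nat \<lceil>\<delta> * n\<rceil>) = nat \<lceil>\<delta> * n\<rceil>"
    by (intro max_absorb2) linarith
  have "real (hamming_ball_card n (nat \<lceil>\<delta> * n\<rceil>)) \<le> real (\<Sum>j<nat \<lceil>\<delta> * n\<rceil>. n choose j)"
    by (simp only: of_nat_le_iff hamming_ball_card_le_sum_choose)
  also have "\<dots> \<le> exp (\<delta> * n) / \<delta> powr (\<delta> * n)"
    by (rule sum_choose_le_exp_div_powr[OF \<open>0 < \<delta>\<close> assms(2)])
  also have "\<dots> = exp (\<delta> * n - \<delta> * n * ln \<delta>)"
    using \<open>0 < \<delta>\<close> by (simp add: powr_def exp_diff)
  also have "\<delta> * n - \<delta> * n * ln \<delta> = ball_exponent \<delta> * n * ln 2"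
    by (simp add: ball_exponent_def field_simps)
  also have "exp \<dots> = 2 powr (ball_exponent \<delta> * n)"
    by (simp add: powr_def)
  also have "\<dots> \<le> 2 powr real (nat \<lceil>ball_exponent \<delta> * n\<rceil>)"
    by (rule powr_mono) (simp_all add: real_nat_ceiling_ge)
  also have "\<dots> = 2 ^ nat \<lceil>ball_exponent \<delta> * n\<rceil>"
    by (simp add: powr_realpow)
  finally have "real (hamming_ball_card n (nat \<lceil>\<delta> * n\<rceil>)) \<le> real ((2::nat) ^ nat \<lceil>ball_exponent \<delta> * n\<rceil>)"
    by simp
  then show ?thesis
    using \<open>max 1 (nat \<lceil>\<delta> * n\<rceil>) = nat \<lceil>\<delta> * n\<rceil>\<close> by (simp only: of_nat_le_iff)
qed

lemma half_less_ln_2: "1/2 < ln (2::real)"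
proof -
  have "exp (1/2::real) * exp (1/2) = exp 1" by (simp flip: exp_add)
  then have "exp (1/2::real) < 2"
    using exp_le mult_mono[of 2 "exp (1/2::real)" 2 "exp (1/2)"] by (cases "exp (1/2::real) < 2") auto
  then have "ln (exp (1/2::real)) < ln 2" by (subst ln_less_cancel_iff) auto
  then show ?thesis by simp
qed

text \<open>This is ln y \<le> y - 1 at y = exp (-c) / \<delta>.\<close>

lemma mult_one_minus_ln_le:
  fixes \<delta> c :: real
  assumes "0 \<le> \<delta>"
  shows "\<delta> * (1 - ln \<delta>) \<le> c * \<delta> + exp (- c)"
proof (cases "\<delta> = 0")
  case False
  then have "0 < \<delta>" using assms by (simp add: less_eq_real_def)
  have "ln (exp (- c) / \<delta>) \<le> exp (- c) / \<delta> - 1"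
    using \<open>0 < \<delta>\<close> by (intro ln_le_minus_one) simp
  moreover have "ln (exp (- c) / \<delta>) = - c - ln \<delta>"
    using \<open>0 < \<delta>\<close> by (simp add: ln_div)
  ultimately have "\<delta> * (1 - c - ln \<delta>) \<le> \<delta> * (exp (- c) / \<delta>)"
    using \<open>0 < \<delta>\<close> by (intro mult_left_mono) auto
  then show ?thesis using \<open>0 < \<delta>\<close> by (simp add: algebra_simps)
qed simp

text \<open>Take c = (5/3) m ln 2 above; then 2 exp (-c) / ln 2 < 2 / (2^m - 1) because
  exp (-c) 2^m = 2^(-2m/3) < 1/2 < ln 2.\<close>

lemma two_ball_exponent_less:
  fixes m :: nat and \<delta> :: real
  assumes "m \<ge> 2" "0 \<le> \<delta>"
  shows "2 * ball_exponent \<delta> < 10/3 * real m * \<delta> + 2 / (2 ^ m - 1)"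
proof -
  define c where "c = 5/3 * real m * ln 2"
  define K where "K = exp (-c)"
  have l2: "0 < ln (2::real)" by simp
  have "0 < K" by (simp add: K_def)
  have "\<delta> * (1 - ln \<delta>) - \<delta> * c \<le> K"
    using mult_one_minus_ln_le[OF assms(2), of c] unfolding K_def by (simp add: mult.commute)
  then have "2 / ln 2 * (\<delta> * (1 - ln \<delta>) - \<delta> * c) \<le> 2 / ln 2 * K"
    using l2 by (intro mult_left_mono) simp_all
  moreover have "2 * ball_exponent \<delta> - 10/3 * real m * \<delta> = 2 / ln 2 * (\<delta> * (1 - ln \<delta>) - \<delta> * c)"
    using l2 unfolding ball_exponent_def c_def by (simp add: field_simps)
  ultimately have "2 * ball_exponent \<delta> - 10/3 * real m * \<delta> \<le> 2 / ln 2 * K"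
    by simp
  also have "\<dots> < 2 / (2 ^ m - 1)"
  proof -
    have "(2::real) ^ m = exp (real m * ln 2)"
      by (simp add: exp_of_nat_mult)
    then have "K * 2 ^ m = exp (-(2/3) * real m * ln 2)"
      unfolding K_def c_def by (simp flip: exp_add)
    also have "\<dots> \<le> exp (-(4/3) * ln 2)"
      using assms(1) l2 by simp
    also have "\<dots> < exp (- ln 2)"
      using l2 by simp
    also have "\<dots> = 1/2"
      by (simp add: exp_minus)
    finally have "K * (2 ^ m - 1) < ln 2"
      using half_less_ln_2 \<open>0 < K\<close> by (simp add: algebra_simps)
    moreover have "(1::real) < 2 ^ m"
      using assms(1) by simp
    ultimately show ?thesis
      using l2 by (simp add: field_simps)
  qed
  finally show ?thesis by simp
qed

lemma large_length_rate_bound: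
  fixes \<beta> R :: real
  assumes "0 \<le> \<beta>" "R + 2 * \<beta> < 1"
  shows "\<exists>n0. \<forall>n::nat\<ge>n0. R * n + real (2 * nat \<lceil>\<beta> * n\<rceil> + 2) < n"
proof (intro exI allI impI)
  define \<eta> where "\<eta> = 1 - R - 2 * \<beta>"
  have "0 < \<eta>" using assms(2) unfolding \<eta>_def by simp
  fix n assume "nat \<lceil>4 / \<eta>\<rceil> + 1 \<le> n"
  then have "4 / \<eta> < n" using real_nat_ceiling_ge[of "4 / \<eta>"] by linarith
  then have "4 < \<eta> * n" using \<open>0 < \<eta>\<close> by (simp add: field_simps)
  moreover have "real (nat \<lceil>\<beta> * n\<rceil>) = of_int \<lceil>\<beta> * n\<rceil>"
    using assms(1) by simp
  then have "real (nat \<lceil>\<beta> * n\<rceil>) \<le> \<beta> * n + 1"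
    using ceiling_correct[of "\<beta> * n"] by linarith
  ultimately show "R * n + real (2 * nat \<lceil>\<beta> * n\<rceil> + 2) < n"
    unfolding \<eta>_def by (simp add: algebra_simps)
qed

lemma liminf_ratio_ge:
  assumes "\<And>i. c * real (N i) \<le> real (x i)" "\<And>i. 0 < N i"
  shows "ereal c \<le> liminf (\<lambda>i. ereal (real (x i) / real (N i)))"
proof (rule Liminf_bounded[OF always_eventually], intro allI)
  fix i
  show "ereal c \<le> ereal (real (x i) / real (N i))"
    using assms[of i] by (simp add: pos_le_divide_eq)
qed

lemma good_stabilizer_codes_for_large_length:
  fixes \<delta> \<beta> R :: real
  assumes "0 \<le> \<beta>" "0 \<le> R" "R + 2 * \<beta> < 1"
    and ball: "\<And>n. hamming_ball_card n (max 1 (nat \<lceil>\<delta> * n\<rceil>)) \<le> 2 ^ nat \<lceil>\<beta> * n\<rceil>"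
  shows "\<exists>n0. \<forall>n\<ge>n0. \<exists>k C. stabilizer_code n k C \<and> R * n \<le> real k \<and> \<delta> * n \<le> real (min_dist n C)"
proof -
  obtain n0 :: nat where n0: "\<And>n::nat. n0 \<le> n \<Longrightarrow> R * n + real (2 * nat \<lceil>\<beta> * n\<rceil> + 2) < n"
    using large_length_rate_bound[OF assms(1,3)] by blast
  have "\<exists>k C. stabilizer_code n k C \<and> R * n \<le> real k \<and> \<delta> * n \<le> real (min_dist n C)"
    if "n0 \<le> n" for n
  proof -
    define s where "s = nat \<lceil>\<beta> * n\<rceil>"
    define d where "d = max 1 (nat \<lceil>\<delta> * n\<rceil>)"
    have "0 \<le> R * real n" using assms(2) by simp
    then have "real (2 * s + 2) < real n" "R * n \<le> real n - real (2 * s + 2)"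
      using n0[OF that] unfolding s_def by linarith+
    then have "2 * s + 3 \<le> n" "R * n \<le> real (n - (2 * s + 2))"
      by (simp_all only: of_nat_less_iff of_nat_diff)
    moreover have "1 \<le> d" "hamming_ball_card n d \<le> 2 ^ s"
      using ball unfolding d_def s_def by simp_all
    ultimately obtain C where "stabilizer_code n (n - (2 * s + 2)) C" "d \<le> min_dist n C"
      using stabilizer_code_exists by blast
    moreover have "\<delta> * n \<le> real d"
      unfolding d_def using real_nat_ceiling_ge[of "\<delta> * n"] by linarith
    ultimately show ?thesis
      using \<open>R * n \<le> real (n - (2 * s + 2))\<close> by force
  qed
  then show ?thesis by blast
qed

lemma stabilizer_code_family:
  fixes \<delta> \<beta> R :: real
  assumes "0 \<le> \<beta>" "0 \<le> R" "R + 2 * \<beta> < 1"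
    and ball: "\<And>n. hamming_ball_card n (max 1 (nat \<lceil>\<delta> * n\<rceil>)) \<le> 2 ^ nat \<lceil>\<beta> * n\<rceil>"
  shows "\<exists>N k d :: nat \<Rightarrow> nat.
           (\<forall>i. \<exists>C. stabilizer_code (N i) (k i) C \<and> min_dist (N i) C = d i)
         \<and> filterlim N at_top sequentially
         \<and> liminf (\<lambda>i. ereal (real (k i) / real (N i))) \<ge> ereal R
         \<and> liminf (\<lambda>i. ereal (real (d i) / real (N i))) \<ge> ereal \<delta>"
proof -
  obtain n0 where "\<forall>n\<ge>n0. \<exists>k C. stabilizer_code n k C \<and> R * n \<le> real k \<and> \<delta> * n \<le> real (min_dist n C)"
    using good_stabilizer_codes_for_large_length[OF assms] by blast
  then obtain k C where kC: "\<And>n. n0 \<le> n \<Longrightarrow>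
      stabilizer_code n (k n) (C n) \<and> R * n \<le> real (k n) \<and> \<delta> * n \<le> real (min_dist n (C n))"
    by metis
  define N where "N i = i + (n0 + 1)" for i
  have N: "n0 \<le> N i" "0 < N i" for i
    unfolding N_def by simp_all
  show ?thesis
  proof (rule exI[of _ N], rule exI[of _ "k \<circ> N"], rule exI[of _ "\<lambda>i. min_dist (N i) (C (N i))"],
      intro conjI)
    show "\<forall>i. \<exists>C'. stabilizer_code (N i) ((k \<circ> N) i) C' \<and> min_dist (N i) C' = min_dist (N i) (C (N i))"
      using kC[OF N(1)] by auto
    show "filterlim N at_top sequentially"
      unfolding N_def by (rule filterlim_add_const_nat_at_top)
    show "ereal R \<le> liminf (\<lambda>i. ereal (real ((k \<circ> N) i) / real (N i)))"
      using kC[OF N(1)] by (intro liminf_ratio_ge[OF _ N(2)]) simp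
    show "ereal \<delta> \<le> liminf (\<lambda>i. ereal (real (min_dist (N i) (C (N i))) / real (N i)))"
      using kC[OF N(1)] by (intro liminf_ratio_ge[OF _ N(2)]) simp
  qed
qed

lemma alt_parameter_bounds:
  fixes m :: nat and \<delta> :: real
  assumes "m \<ge> 2" "0 \<le> \<delta>" "\<delta> < 1 / (2 * real m) * (1 / 2 - 1 / (2 ^ m - 1))"
  shows "\<delta> \<le> 1" "0 < 1 - 10 / 3 * real m * \<delta> - 2 / (2 ^ m - 1)"
proof -
  define q where "q = 1 / ((2::real) ^ m - 1)"
  have "(2::real) ^ 2 \<le> 2 ^ m" using assms(1) by (intro power_increasing) auto
  then have "0 < q" "q \<le> 1/3" unfolding q_def by (simp_all add: field_simps)
  have "real m * \<delta> < real m * (1 / (2 * real m) * (1 / 2 - q))"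
    using assms(1,3) unfolding q_def by (intro mult_strict_left_mono) auto
  also have "\<dots> = 1/2 * (1/2 - q)" using assms(1) by (simp add: field_simps)
  finally have m\<delta>: "real m * \<delta> < 1/2 * (1/2 - q)" .
  have "2 * \<delta> \<le> real m * \<delta>"
    using assms(1,2) by (intro mult_right_mono) auto
  then show "\<delta> \<le> 1"
    using m\<delta> \<open>0 < q\<close> by argo
  have "2 / (2 ^ m - 1) = 2 * (q::real)"
    unfolding q_def by simp
  then show "0 < 1 - 10 / 3 * real m * \<delta> - 2 / (2 ^ m - 1)"
    using m\<delta> \<open>q \<le> 1/3\<close> by argo
qed

theorem mainTheorem5:
  fixes m :: nat and \<delta> :: real
  assumes "m \<ge> 2"
    and "0 \<le> \<delta>"
    and "\<delta> < 1 / (2 * real m) * (1 / 2 - 1 / (2 ^ m - 1))"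
  shows "\<exists>N k d :: nat \<Rightarrow> nat.
           (\<forall>i. \<exists>C. stabilizer_code (N i) (k i) C \<and> min_dist (N i) C = d i)
         \<and> filterlim N at_top sequentially
         \<and> liminf (\<lambda>i. ereal (real (k i) / real (N i)))
             \<ge> ereal (1 - 10 / 3 * real m * \<delta> - 2 / (2 ^ m - 1))
         \<and> liminf (\<lambda>i. ereal (real (d i) / real (N i))) \<ge> ereal \<delta>"
proof (rule stabilizer_code_family)
  note bounds = alt_parameter_bounds[OF assms]
  show "0 \<le> ball_exponent \<delta>"
    using ball_exponent_nonneg[OF assms(2) bounds(1)] .
  show "0 \<le> 1 - 10 / 3 * real m * \<delta> - 2 / (2 ^ m - 1)"
    using bounds(2) by simp
  show "1 - 10 / 3 * real m * \<delta> - 2 / (2 ^ m - 1) + 2 * ball_exponent \<delta> < 1"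
    using two_ball_exponent_less[OF assms(1,2)] by simp
  show "hamming_ball_card n (max 1 (nat \<lceil>\<delta> * n\<rceil>)) \<le> 2 ^ nat \<lceil>ball_exponent \<delta> * n\<rceil>" for n
    by (rule hamming_ball_card_le_ball_exponent[OF assms(2) bounds(1)])
qed

end
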